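(* Let $f\colon\mathbb{N}\to\mathbb{N}$ be a growth function, $d$ a positive integer, and $\psi=\psi_{d,f}$. If $(N_1,\dots,N_d),(M_1,\dots,M_d)\in\mathbb{N}^d$ satisfy $\sum_iN_i\le\sum_iM_i$ and $(N_1,\dots,N_d)\le(M_1,\dots,M_d)$ in the inverse lexicographic order, then $\psi(N_1,\dots,N_d)\le\psi(M_1,\dots,M_d)$.
   Context: A growth function is a non-decreasing $f\colon\mathbb{N}\to\mathbb{N}$ with $f(r)\ge r$ for all $r$ ($\mathbb{N}$ includes $0$). Inverse lexicographic order on $\mathbb{N}^d$: $\vec N<\vec M$ if at the largest index $j$ with $N_j\ne M_j$ one has $N_j<M_j$. $\psi_{d,f}\colon\mathbb{N}^d\to\mathbb{N}$ is defined recursively: $\psi_{d,f}(M_1,0,\dots,0)=M_1$; otherwise, if $\ell\ge2$ is the smallest index with $M_\ell>0$, $\psi_{d,f}(M_1,\dots,M_d)=\psi_{d,f}(M_1,\dots,M_{\ell-1}+f(\sum_iM_i),M_\ell-1,M_{\ell+1},\dots,M_d)$. *)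

theory Defs
  imports Main
begin

(* Vectors (M_1,...,M_d) in N^d are represented as lists M of length d,
   with M_i = M ! (i - 1) (0-based list indices). *)

definition growth_function :: "(nat \<Rightarrow> nat) \<Rightarrow> bool" where
  "growth_function f \<longleftrightarrow> mono f \<and> (\<forall>r. f r \<ge> r)"

definition invlex_less :: "nat list \<Rightarrow> nat list \<Rightarrow> bool" where
  "invlex_less N M \<longleftrightarrow> length N = length M \<and>
     (\<exists>j < length M. N ! j < M ! j \<and> (\<forall>k. j < k \<and> k < length M \<longrightarrow> N ! k = M ! k))"

definition invlex_le :: "nat list \<Rightarrow> nat list \<Rightarrow> bool" where
  "invlex_le N M \<longleftrightarrow> N = M \<or> invlex_less N M"

definition first_pos :: "nat list \<Rightarrow> nat" where
  "first_pos M = (LEAST l. 1 \<le> l \<and> l < length M \<and> 0 < M ! l)"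

definition psi_step :: "(nat \<Rightarrow> nat) \<Rightarrow> nat list \<Rightarrow> nat list" where
  "psi_step f M = (let l = first_pos M in
      M[l - 1 := M ! (l - 1) + f (sum_list M), l := M ! l - 1])"

lemma psi_step_decreases:
  assumes "\<not> (\<forall>i. 1 \<le> i \<and> i < length M \<longrightarrow> M ! i = 0)"
  shows "(rev (psi_step f M), rev M) \<in> lex less_than"
proof -
  define l where "l = first_pos M"
  have ex: "\<exists>l. 1 \<le> l \<and> l < length M \<and> 0 < M ! l" using assms by auto
  have P: "1 \<le> l \<and> l < length M \<and> 0 < M ! l"
    unfolding l_def first_pos_def by (rule LeastI_ex[OF ex])
  define M' where "M' = psi_step f M"
  have M': "M' = M[l - 1 := M ! (l - 1) + f (sum_list M), l := M ! l - 1]"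
    unfolding M'_def psi_step_def l_def Let_def by simp
  have len: "length M' = length M" using M' by simp
  have lt: "M' ! l < M ! l" using M' P by simp
  have dr: "drop (Suc l) M' = drop (Suc l) M"
    using M' P by (simp add: drop_update_cancel)
  have dM: "M = take l M @ M ! l # drop (Suc l) M" using P by (simp add: id_take_nth_drop)
  have dM': "M' = take l M' @ M' ! l # drop (Suc l) M'" using P len by (simp add: id_take_nth_drop)
  have "rev M = rev (drop (Suc l) M) @ M ! l # rev (take l M)"
    by (subst dM) simp
  moreover have "rev M' = rev (drop (Suc l) M) @ M' ! l # rev (take l M')"
    by (subst dM') (simp add: dr)
  ultimately show ?thesis
    unfolding M'_def[symmetric] using lt len
    by (auto simp: lex_conv intro!: exI[of _ "rev (drop (Suc l) M)"])
qed

function psi :: "(nat \<Rightarrow> nat) \<Rightarrow> nat list \<Rightarrow> nat" where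
  "psi f M = (if (\<forall>i. 1 \<le> i \<and> i < length M \<longrightarrow> M ! i = 0) then M ! 0
                else psi f (psi_step f M))"
  by auto
termination
  by (relation "inv_image (lex less_than) (\<lambda>(f, M). rev M)")
     (auto intro: psi_step_decreases)

end

theory Submission
  imports Defs
begin

text \<open>Run the recursions for \<open>\<psi>(N)\<close> and \<open>\<psi>(M)\<close> in parallel. A step replaces the
sum \<open>s\<close> of the entries by \<open>s + f s - 1\<close>, which is monotone in \<open>s\<close> and at least \<open>s\<close>; so the
sums stay ordered, and \<open>\<Sigma>M \<le> \<psi>(M)\<close>. A step also preserves the strict inverse lexicographic
order: in the one delicate case the comparison moves down to an index where the larger vector
gains \<open>f s \<ge> s\<close>, more than the entry of the stepped smaller vector there. Once \<open>N\<close>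
reaches the form \<open>(N\<^sub>1, 0, \<dots>, 0)\<close>, we get \<open>\<psi>(N) = N\<^sub>1 \<le> \<Sigma>N \<le> \<Sigma>M \<le> \<psi>(M)\<close>.\<close>

definition terminal :: "nat list \<Rightarrow> bool" where
  "terminal M \<longleftrightarrow> (\<forall>i. 1 \<le> i \<and> i < length M \<longrightarrow> M ! i = 0)"

declare psi.simps[simp del]

lemma psi_terminal: "terminal M \<Longrightarrow> psi f M = M ! 0"
  unfolding terminal_def by (subst psi.simps) simp

lemma psi_nonterminal: "\<not> terminal M \<Longrightarrow> psi f M = psi f (psi_step f M)"
  unfolding terminal_def by (subst psi.simps) auto

lemma first_pos_nonterminal:
  assumes "\<not> terminal M"
  shows "1 \<le> first_pos M" "first_pos M < length M" "0 < M ! first_pos M"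
proof -
  have "\<exists>l. 1 \<le> l \<and> l < length M \<and> 0 < M ! l"
    using assms unfolding terminal_def by auto
  then have "1 \<le> first_pos M \<and> first_pos M < length M \<and> 0 < M ! first_pos M"
    unfolding first_pos_def by (rule LeastI_ex)
  then show "1 \<le> first_pos M" "first_pos M < length M" "0 < M ! first_pos M" by auto
qed

lemma first_pos_le: "1 \<le> i \<Longrightarrow> i < length M \<Longrightarrow> 0 < M ! i \<Longrightarrow> first_pos M \<le> i"
  unfolding first_pos_def by (rule Least_le) auto

lemma first_pos_cong:
  assumes "length N = length M" "\<And>i. 1 \<le> i \<Longrightarrow> i < length M \<Longrightarrow> N ! i = M ! i"
  shows "first_pos N = first_pos M"
  unfolding first_pos_def using assms by (intro arg_cong[where f = Least] ext) auto

lemma length_psi_step [simp]: "length (psi_step f M) = length M"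
  unfolding psi_step_def Let_def by simp

lemma nth_psi_step:
  assumes "\<not> terminal M" "i < length M"
  shows "psi_step f M ! i =
    (if i = first_pos M - 1 then M ! i + f (sum_list M)
     else if i = first_pos M then M ! i - 1 else M ! i)"
  using first_pos_nonterminal[OF assms(1)] assms(2) unfolding psi_step_def Let_def
  by (auto simp: nth_list_update)

lemma nth_add_nth_le_sum_list:
  fixes N :: "nat list"
  assumes "p \<noteq> q" "p < length N" "q < length N"
  shows "N ! p + N ! q \<le> sum_list N"
proof -
  have "N ! p + N ! q = (\<Sum>i\<in>{p,q}. N ! i)" using assms by simp
  also have "\<dots> \<le> (\<Sum>i = 0..<length N. N ! i)"
    by (rule sum_mono2) (use assms in auto)
  finally show ?thesis by (simp add: sum_list_sum_nth)
qed

lemma nth_psi_step_less_sum_list: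
  assumes "\<not> terminal M" "i < length M" "i \<noteq> first_pos M - 1"
  shows "psi_step f M ! i < sum_list M"
proof (cases "i = first_pos M")
  case True
  then show ?thesis
    using assms first_pos_nonterminal[OF assms(1)] elem_le_sum_list[of i M] by (simp add: nth_psi_step)
next
  case False
  then have "M ! i + M ! first_pos M \<le> sum_list M"
    using assms first_pos_nonterminal[OF assms(1)] by (intro nth_add_nth_le_sum_list) auto
  then show ?thesis
    using False assms first_pos_nonterminal[OF assms(1)] by (simp add: nth_psi_step)
qed

lemma sum_list_psi_step:
  assumes "growth_function f" "\<not> terminal M"
  shows "sum_list (psi_step f M) = sum_list M + f (sum_list M) - 1"
proof -
  define l where "l = first_pos M"
  define s where "s = sum_list M"
  note l = first_pos_nonterminal[OF assms(2), folded l_def]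
  have "M ! l \<le> s" using l unfolding s_def by (simp add: elem_le_sum_list)
  moreover have "s \<le> f s" using assms(1) unfolding growth_function_def by auto
  ultimately show ?thesis
    using l unfolding psi_step_def Let_def l_def[symmetric] s_def[symmetric]
    by (simp add: sum_list_update nth_list_update s_def)
qed

lemma terminal_Cons: "terminal (x # xs) \<longleftrightarrow> (\<forall>y\<in>set xs. y = 0)"
  unfolding terminal_def all_set_conv_all_nth by (auto simp: nth_Cons' less_Suc_eq_0_disj)

lemma sum_list_le_psi:
  assumes "growth_function f"
  shows "sum_list M \<le> psi f M"
  using assms
proof (induction f M rule: psi.induct)
  case (1 f M)
  show ?case
  proof (cases "terminal M")
    case True
    then show ?thesis
      by (cases M) (auto simp: psi_terminal terminal_Cons sum_list_eq_0_iff)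
  next
    case False
    have "sum_list M \<le> f (sum_list M)" using "1.prems" unfolding growth_function_def by auto
    moreover have "0 < sum_list M"
      using first_pos_nonterminal[OF False] elem_le_sum_list[of "first_pos M" M] by linarith
    ultimately have "sum_list M \<le> sum_list (psi_step f M)"
      using sum_list_psi_step[OF "1.prems" False] by linarith
    also have "\<dots> \<le> psi f (psi_step f M)"
      using "1.IH" "1.prems" False unfolding terminal_def by simp
    finally show ?thesis using psi_nonterminal[OF False] by simp
  qed
qed

lemma invlex_lessI:
  assumes "length N = length M" "j < length M" "N ! j < M ! j"
    "\<And>k. j < k \<Longrightarrow> k < length M \<Longrightarrow> N ! k = M ! k"
  shows "invlex_less N M"
  unfolding invlex_less_def using assms by blast

lemma invlex_less_psi_step_same_tail:
  assumes f: "growth_function f" and len: "length N = length M"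
    and sum: "sum_list N \<le> sum_list M" and M: "\<not> terminal M"
    and head: "N ! 0 < M ! 0" and tail: "\<And>k. 0 < k \<Longrightarrow> k < length M \<Longrightarrow> N ! k = M ! k"
  shows "invlex_less (psi_step f N) (psi_step f M)"
proof -
  have N: "\<not> terminal N" using M len tail unfolding terminal_def by auto
  define l where "l = first_pos M"
  have l_N: "first_pos N = l" unfolding l_def using len tail by (intro first_pos_cong) auto
  note l = first_pos_nonterminal[OF M, folded l_def]
  have step_N: "psi_step f N ! i = (if i = l - 1 then N ! i + f (sum_list N)
      else if i = l then N ! i - 1 else N ! i)" if "i < length M" for i
    using nth_psi_step[OF N] that len by (simp add: l_N)
  have step_M: "psi_step f M ! i = (if i = l - 1 then M ! i + f (sum_list M)
      else if i = l then M ! i - 1 else M ! i)" if "i < length M" for i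
    using nth_psi_step[OF M] that by (simp add: l_def)
  have "M \<noteq> []" using l by auto
  have "f (sum_list N) \<le> f (sum_list M)"
    using f sum unfolding growth_function_def mono_def by auto
  then have "psi_step f N ! (l - 1) < psi_step f M ! (l - 1) \<or>
      l - 1 \<noteq> 0 \<and> psi_step f N ! (l - 1) = psi_step f M ! (l - 1)"
    using \<open>M \<noteq> []\<close> l head tail[of "l - 1"] step_N[of "l - 1"] step_M[of "l - 1"]
    by (cases "l - 1 = 0") auto
  then consider "psi_step f N ! (l - 1) < psi_step f M ! (l - 1)"
    | "l - 1 \<noteq> 0" "psi_step f N ! (l - 1) = psi_step f M ! (l - 1)"
    by blast
  then show ?thesis
  proof cases
    case 1
    then show ?thesis
      using l len tail step_N step_M by (intro invlex_lessI[of _ _ "l - 1"]) auto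
  next
    case 2
    have "psi_step f N ! 0 = N ! 0" "psi_step f M ! 0 = M ! 0"
      using 2 \<open>M \<noteq> []\<close> step_N[of 0] step_M[of 0] by auto
    with 2 show ?thesis
      using l len head tail step_N step_M by (intro invlex_lessI[of _ _ 0]) auto
  qed
qed

lemma invlex_less_psi_step_tail_differs:
  assumes f: "growth_function f" and len: "length N = length M"
    and sum: "sum_list N \<le> sum_list M" and N: "\<not> terminal N" and M: "\<not> terminal M"
    and j: "0 < j" "j < length M" "N ! j < M ! j"
    and tail: "\<And>k. j < k \<Longrightarrow> k < length M \<Longrightarrow> N ! k = M ! k"
  shows "invlex_less (psi_step f N) (psi_step f M)"
proof -
  define lN where "lN = first_pos N"
  define lM where "lM = first_pos M"
  note lN = first_pos_nonterminal[OF N, folded lN_def]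
    and lM = first_pos_nonterminal[OF M, folded lM_def]
  have step_N: "psi_step f N ! i = (if i = lN - 1 then N ! i + f (sum_list N)
      else if i = lN then N ! i - 1 else N ! i)" if "i < length M" for i
    using nth_psi_step[OF N] that len by (simp add: lN_def)
  have step_M: "psi_step f M ! i = (if i = lM - 1 then M ! i + f (sum_list M)
      else if i = lM then M ! i - 1 else M ! i)" if "i < length M" for i
    using nth_psi_step[OF M] that by (simp add: lM_def)
  have "lM \<le> j" unfolding lM_def using j by (intro first_pos_le) auto
  then consider "j < lN" | "lN = j \<or> lN < j \<and> lM < j \<or> lN < j \<and> N ! j < M ! j - 1"
    | (tight) "lN < j" "lM = j" "N ! j = M ! j - 1"
    using j by linarith
  then show ?thesis
  proof cases
    case 1
    then show ?thesis
      using lN lM \<open>lM \<le> j\<close> len j tail step_N step_M by (intro invlex_lessI[of _ _ lN]) auto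
  next
    case 2
    then show ?thesis
      using lN lM \<open>lM \<le> j\<close> len j tail step_N step_M
      by (intro invlex_lessI[of _ _ j]) (elim disjE conjE; auto)+
  next
    case tight
    \<comment> \<open>\<open>M\<close>'s step lowers \<open>M ! j\<close> to \<open>N ! j\<close>; the order is decided at \<open>j - 1\<close>, where
      \<open>M\<close> gains \<open>f (sum_list M) \<ge> sum_list N\<close>.\<close>
    have "psi_step f N ! (j - 1) < sum_list N"
      using tight lN j len unfolding lN_def by (intro nth_psi_step_less_sum_list N) auto
    also have "\<dots> \<le> f (sum_list M)"
      using sum f unfolding growth_function_def by (meson le_trans)
    also have "\<dots> \<le> psi_step f M ! (j - 1)"
      using tight j step_M[of "j - 1"] by simp
    finally have "psi_step f N ! (j - 1) < psi_step f M ! (j - 1)" .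
    moreover have "psi_step f N ! k = psi_step f M ! k" if "j - 1 < k" "k < length M" for k
    proof (cases "k = j")
      case True
      then show ?thesis using tight j step_N step_M by auto
    next
      case False
      then show ?thesis using tight lN j tail that step_N step_M by auto
    qed
    ultimately show ?thesis using len j by (intro invlex_lessI[of _ _ "j - 1"]) auto
  qed
qed

lemma invlex_less_psi_step:
  assumes "growth_function f" "sum_list N \<le> sum_list M" "\<not> terminal N" "\<not> terminal M"
    and "invlex_less N M"
  shows "invlex_less (psi_step f N) (psi_step f M)"
proof -
  obtain j where len: "length N = length M" and j: "j < length M" "N ! j < M ! j"
    and tail: "\<And>k. j < k \<Longrightarrow> k < length M \<Longrightarrow> N ! k = M ! k"
    using assms(5) unfolding invlex_less_def by blast
  show ?thesis
  proof (cases "j = 0")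
    case True
    then show ?thesis
      using assms(1,2,4) len j tail by (intro invlex_less_psi_step_same_tail) auto
  next
    case False
    then show ?thesis
      using assms(1-4) len j tail by (intro invlex_less_psi_step_tail_differs) auto
  qed
qed

lemma invlex_less_terminal:
  assumes "invlex_less N M" "terminal M"
  shows "terminal N"
proof -
  obtain j where len: "length N = length M" and j: "j < length M" "N ! j < M ! j"
    and tail: "\<And>k. j < k \<Longrightarrow> k < length M \<Longrightarrow> N ! k = M ! k"
    using assms(1) unfolding invlex_less_def by blast
  have "j = 0" using assms(2) j unfolding terminal_def by (cases j) auto
  then show ?thesis using assms(2) len tail unfolding terminal_def by auto
qed

lemma sum_list_psi_step_mono:
  assumes f: "growth_function f" and "\<not> terminal N" "\<not> terminal M" "sum_list N \<le> sum_list M"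
  shows "sum_list (psi_step f N) \<le> sum_list (psi_step f M)"
proof -
  have "f (sum_list N) \<le> f (sum_list M)"
    using assms unfolding growth_function_def mono_def by blast
  then show ?thesis using assms by (simp add: sum_list_psi_step)
qed

lemma psi_mono_invlex:
  "growth_function f \<Longrightarrow> sum_list N \<le> sum_list M \<Longrightarrow> invlex_le N M \<Longrightarrow> psi f N \<le> psi f M"
proof (induction f M arbitrary: N rule: psi.induct)
  case (1 f M)
  show ?case
  proof (cases "N = M")
    case True
    then show ?thesis by simp
  next
    case False
    then have less: "invlex_less N M" using "1.prems"(3) unfolding invlex_le_def by blast
    show ?thesis
    proof (cases "terminal N")
      case True
      obtain j where "length N = length M" "j < length M"
        using less unfolding invlex_less_def by blast
      then have "N \<noteq> []" by auto
      then have "psi f N \<le> sum_list N"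
        using True by (simp add: psi_terminal elem_le_sum_list)
      also have "\<dots> \<le> sum_list M" by (rule "1.prems"(2))
      also have "\<dots> \<le> psi f M" using "1.prems"(1) by (rule sum_list_le_psi)
      finally show ?thesis .
    next
      case False
      have M: "\<not> terminal M" using False less invlex_less_terminal by blast
      have "psi f (psi_step f N) \<le> psi f (psi_step f M)"
      proof (rule "1.IH")
        show "\<not> (\<forall>i. 1 \<le> i \<and> i < length M \<longrightarrow> M ! i = 0)"
          using M unfolding terminal_def .
        show "sum_list (psi_step f N) \<le> sum_list (psi_step f M)"
          using "1.prems" False M by (intro sum_list_psi_step_mono)
        show "invlex_le (psi_step f N) (psi_step f M)"
          using "1.prems" False M less invlex_less_psi_step unfolding invlex_le_def by blast
      qed (rule "1.prems"(1))
      then show ?thesis using False M by (simp add: psi_nonterminal)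
    qed
  qed
qed

theorem proposition3p13:
  fixes f :: "nat \<Rightarrow> nat" and d :: nat and N M :: "nat list"
  assumes "growth_function f"
    and "d \<ge> 1"
    and "length N = d" and "length M = d"
    and "sum_list N \<le> sum_list M"
    and "invlex_le N M"
  shows "psi f N \<le> psi f M"
  by (rule psi_mono_invlex[OF assms(1,5,6)])

end
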